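(* Assume in addition that $l$ is $\mu$-strongly convex on $\mathcal{X}$ for some $\mu>0$. Let $(y^{k},x^{k})_{k\ge0}$ be generated by SPDHG (as in the context) with step-sizes $\beta^{k+1}=\frac{2}{\mu(k+2)+2L}$. For any saddle point $(y^*,x^* )$ of $\min_{x\in\mathcal{X}}\max_{y\in\mathcal{Y}}P(y,x)$ and every $k\ge0$, $$0 \geq \mathbb{E}\left[ P(y^{k+1},x^* ) - P(y^*,x^{k+1}) \right] \geq \frac{\mu(k+2)+2L}{4}\mathbb{E}\| x^*-x^{k+1}\|^2 + \frac{1}{2s}\mathbb{E}\| y^*-y^{k+1}\|^2 -\frac{\mu k+2L}{4}\mathbb{E}\| x^*-x^k\|^2 - \frac{1}{2s}\mathbb{E}\| y^*-y^k\|^2 - \frac{2\lambda_{\max}(F^\top F)D_y^2+2\sigma^2}{\mu(k+1)}.$$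
   Context: Setting: $\mathcal{X}\subset\mathbb{R}^d$ is a nonempty convex compact set, $\mathcal{Y}\subset\mathbb{R}^l$ is a nonempty convex compact set with diameter $D_y$ (so $\|y-y'\|\le D_y$ for all $y,y'\in\mathcal{Y}$), $F\in\mathbb{R}^{l\times d}$, and $\lambda_{\max}(F^\top F)$ denotes the largest eigenvalue of $F^\top F$. The loss is $l(x)=\mathbb{E}_\xi[l(x,\xi)]$, a convex, continuously differentiable function on $\mathcal{X}$ with $L$-Lipschitz gradient: $\|\nabla l(x_1)-\nabla l(x_2)\|\le L\|x_1-x_2\|$ for all $x_1,x_2\in\mathcal{X}$. $\mu$-strong convexity means $l(y)-l(x)-(y-x)^\top\nabla l(x)\ge\frac{\mu}{2}\|y-x\|^2$ for all $x,y\in\mathcal{X}$. The stochastic gradient $\nabla l(x,\xi)$ satisfies, for every $x\in\mathcal{X}$: $\mathbb{E}[\nabla l(x,\xi)]=\nabla l(x)$ and $\mathbb{E}\|\nabla l(x,\xi)-\nabla l(x)\|^2\le\sigma^2$ for a constant $\sigma>0$. The saddle function is $P(y,x)=l(x)+\langle y,Fx\rangle$ for $x\in\mathcal{X},y\in\mathcal{Y}$; a saddle point $(y^*,x^* )$ satisfies $P(y,x^* )\le P(y^*,x^* )\le P(y^*,x)$ for all $(y,x)\in\mathcal{Y}\times\mathcal{X}$. SPDHG: fix $s>0$, $x^0\in\mathcal{X}$, $y^0\in\mathcal{Y}$, and step-sizes $\beta^{k+1}>0$. For $k=0,1,2,\dots$, draw a sample $\xi^{k+1}$ independently of the past (i.i.d.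 samples), and set $$y^{k+1}=\arg\max_{y\in\mathcal{Y}}\Big\{P(y,x^k)-\tfrac{1}{2s}\|y-y^k\|^2\Big\},\qquad x^{k+1}=\Pi_{\mathcal{X}}\Big[x^k-\beta^{k+1}\big(\nabla l(x^k,\xi^{k+1})+F^\top y^{k+1}\big)\Big],$$ where $\Pi_{\mathcal{X}}$ is Euclidean projection onto $\mathcal{X}$. *)

theory Defs
  imports "HOL-Probability.Probability"
begin

definition Psad :: "(real^'d \<Rightarrow> real) \<Rightarrow> real^'d^'l \<Rightarrow> real^'l \<Rightarrow> real^'d \<Rightarrow> real" where
  "Psad l F y x = l x + y \<bullet> (F *v x)"

definition lambda_max :: "real^'n^'n \<Rightarrow> real" where
  "lambda_max A = Max {c. \<exists>v. v \<noteq> 0 \<and> A *v v = c *\<^sub>R v}"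

text \<open>SPDHG iterates (y^k, x^k) driven by the sample sequence: sample number k
  (the paper's xi^{k+1}) is xs k.\<close>
fun spdhg :: "(real^'d) set \<Rightarrow> (real^'l) set \<Rightarrow> real^'d^'l \<Rightarrow> (real^'d \<Rightarrow> real)
   \<Rightarrow> (real^'d \<Rightarrow> 'e \<Rightarrow> real^'d) \<Rightarrow> real \<Rightarrow> (nat \<Rightarrow> real)
   \<Rightarrow> real^'d \<Rightarrow> real^'l \<Rightarrow> (nat \<Rightarrow> 'e) \<Rightarrow> nat \<Rightarrow> (real^'l) \<times> (real^'d)" where
  "spdhg X Y F l g s beta x0 y0 xs 0 = (y0, x0)"
| "spdhg X Y F l g s beta x0 y0 xs (Suc k) =
     (let yk = fst (spdhg X Y F l g s beta x0 y0 xs k);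
          xk = snd (spdhg X Y F l g s beta x0 y0 xs k);
          y' = arg_max (\<lambda>v. Psad l F v xk - (1 / (2 * s)) * (norm (v - yk))\<^sup>2) (\<lambda>v. v \<in> Y);
          x' = closest_point X (xk - beta (Suc k) *\<^sub>R (g xk (xs k) + transpose F *v y'))
      in (y', x'))"

end

theory Submission
  imports Defs
begin

text \<open>Both projection steps of SPDHG satisfy the variational inequality of the Euclidean projection.
  Combined with strong convexity of \<open>l\<close> at \<open>x\<^sup>k\<close> and the descent lemma for the \<open>L\<close>-smooth loss,
  they give a deterministic one-step inequality in which the stochastic gradient enters only
  through its error \<open>\<delta> = \<nabla>l(x\<^sup>k,\<xi>\<^sup>k\<^sup>+\<^sup>1) - \<nabla>l(x\<^sup>k)\<close>; the cross terms in \<open>d = x\<^sup>k\<^sup>+\<^sup>1 - x\<^sup>k\<close> are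
  absorbed by completing the square, using \<open>\<parallel>F d\<parallel>\<^sup>2 \<le> \<lambda>\<^sub>m\<^sub>a\<^sub>x(F\<^sup>T F) \<parallel>d\<parallel>\<^sup>2\<close> and \<open>\<parallel>y\<^sup>k\<^sup>+\<^sup>1 - y\<^sup>*\<parallel> \<le> D\<^sub>y\<close>.
  Since \<open>x\<^sup>k\<close> is a function of the first \<open>k\<close> samples, which are independent of \<open>\<xi>\<^sup>k\<^sup>+\<^sup>1\<close>, the error has
  conditional mean zero and second moment at most \<open>\<sigma>\<^sup>2\<close>, so taking expectations gives the lower bound.
  The upper bound \<open>0\<close> is the saddle-point property.\<close>

section \<open>The spectral bound for \<open>F\<^sup>T F\<close>\<close>

lemma matrix_vector_mult_inner_transpose:
  fixes A :: "real^'n^'m"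
  shows "(A *v x) \<bullet> y = x \<bullet> (transpose A *v y)"
  by (metis dot_lmul_matrix inner_commute transpose_matrix_vector)

lemma linear_coeff_zero_if_quadratic_nonneg:
  fixes b q :: real
  assumes nonneg: "\<And>t. 2 * t * b + t\<^sup>2 * q \<ge> 0" and q: "q \<ge> 0"
  shows "b = 0"
proof -
  define t where "t = - b / (q + 1)"
  have tq: "t * (q + 1) = - b" using q unfolding t_def by (simp add: field_simps)
  have "(2 * t * b + t\<^sup>2 * q) * (q + 1)\<^sup>2 \<ge> 0" using nonneg by simp
  moreover have "(2 * t * b + t\<^sup>2 * q) * (q + 1)\<^sup>2 = 2 * (t * (q + 1)) * b * (q + 1) + (t * (q + 1))\<^sup>2 * q"
    by (simp add: algebra_simps power2_eq_square)
  ultimately have "2 * (- b) * b * (q + 1) + (- b)\<^sup>2 * q \<ge> 0" by (simp only: tq)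
  then have "b\<^sup>2 * (q + 2) \<le> 0" by (simp add: algebra_simps power2_eq_square)
  moreover have "q + 2 > 0" using q by simp
  ultimately have "b\<^sup>2 \<le> 0" by (simp add: mult_le_0_iff)
  then show ?thesis by simp
qed

text \<open>Eigenvectors of a symmetric matrix for distinct eigenvalues are orthogonal, hence independent.\<close>
lemma finite_eigenvalues_symmetric:
  fixes A :: "real^'n^'n"
  assumes sym: "transpose A = A"
  shows "finite {c. \<exists>v. v \<noteq> 0 \<and> A *v v = c *\<^sub>R v}"
proof -
  define S where "S = {c. \<exists>v. v \<noteq> 0 \<and> A *v v = c *\<^sub>R v}"
  define ev where "ev c = (SOME v. v \<noteq> 0 \<and> A *v v = c *\<^sub>R v)" for c
  have ev: "ev c \<noteq> 0 \<and> A *v ev c = c *\<^sub>R ev c" if "c \<in> S" for c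
  proof -
    from that obtain v where "v \<noteq> 0 \<and> A *v v = c *\<^sub>R v" unfolding S_def by blast
    then show ?thesis unfolding ev_def by (rule someI)
  qed
  have inj: "inj_on ev S"
  proof (rule inj_onI)
    fix c d assume c: "c \<in> S" and d: "d \<in> S" and eq: "ev c = ev d"
    have "c *\<^sub>R ev c = A *v ev c" using ev[OF c] by simp
    also have "\<dots> = A *v ev d" using eq by (rule arg_cong)
    also have "\<dots> = d *\<^sub>R ev d" using ev[OF d] by simp
    also have "\<dots> = d *\<^sub>R ev c" using eq by simp
    finally have "(c - d) *\<^sub>R ev c = 0" by (simp add: algebra_simps)
    then show "c = d" using ev[OF c] by simp
  qed
  have "pairwise orthogonal (ev ` S)"
    unfolding pairwise_def
  proof (intro ballI impI)
    fix x y assume x: "x \<in> ev ` S" and y: "y \<in> ev ` S" and "x \<noteq> y"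
    from x obtain c where c: "c \<in> S" "x = ev c" by blast
    from y obtain d where d: "d \<in> S" "y = ev d" by blast
    from \<open>x \<noteq> y\<close> c d have "c \<noteq> d" by blast
    have "c * (ev c \<bullet> ev d) = (A *v ev c) \<bullet> ev d" using ev[OF c(1)] by simp
    also have "\<dots> = ev c \<bullet> (A *v ev d)" by (simp only: matrix_vector_mult_inner_transpose sym)
    also have "\<dots> = d * (ev c \<bullet> ev d)" using ev[OF d(1)] by simp
    finally have "(c - d) * (ev c \<bullet> ev d) = 0" by (simp add: algebra_simps)
    then show "orthogonal x y" using \<open>c \<noteq> d\<close> c d by (simp add: orthogonal_def)
  qed
  moreover have "0 \<notin> ev ` S" using ev by auto
  ultimately have "independent (ev ` S)" by (intro pairwise_orthogonal_independent)
  then have "finite (ev ` S)" using independent_bound by blast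
  then have "finite S" using inj by (rule finite_imageD)
  then show ?thesis unfolding S_def .
qed

text \<open>First-order optimality of the Rayleigh quotient of \<open>F\<^sup>T F\<close>: the derivative of
  \<open>c \<parallel>v\<^sub>0 + t w\<parallel>\<^sup>2 - \<parallel>F (v\<^sub>0 + t w)\<parallel>\<^sup>2 \<ge> 0\<close> at \<open>t = 0\<close> must vanish.\<close>
lemma rayleigh_maximizer_eigenvector:
  fixes F :: "real^'d^'l"
  assumes bound: "\<And>v. (norm (F *v v))\<^sup>2 \<le> c * (norm v)\<^sup>2"
    and v0: "norm v0 = 1" and c: "(norm (F *v v0))\<^sup>2 = c"
  shows "(transpose F ** F) *v v0 = c *\<^sub>R v0"
proof -
  have "(c *\<^sub>R v0 - (transpose F ** F) *v v0) \<bullet> w = 0" for w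
  proof -
    define b where "b = c * (v0 \<bullet> w) - (F *v v0) \<bullet> (F *v w)"
    define q where "q = c * (norm w)\<^sup>2 - (norm (F *v w))\<^sup>2"
    have "2 * t * b + t\<^sup>2 * q \<ge> 0" for t
    proof -
      have "(norm (F *v v0 + t *\<^sub>R (F *v w)))\<^sup>2 \<le> c * (norm (v0 + t *\<^sub>R w))\<^sup>2"
        using bound[of "v0 + t *\<^sub>R w"] by (simp add: matrix_vector_right_distrib matrix_vector_mult_scaleR)
      then show ?thesis
        using v0 c unfolding b_def q_def power2_norm_eq_inner
        by (simp add: inner_add_left inner_add_right algebra_simps power2_eq_square inner_commute norm_eq_1)
    qed
    then have "b = 0"
      using bound[of w] by (intro linear_coeff_zero_if_quadratic_nonneg) (auto simp: q_def)
    moreover have "(F *v v0) \<bullet> (F *v w) = ((transpose F ** F) *v v0) \<bullet> w"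
      by (simp only: matrix_vector_mul_assoc[symmetric] matrix_vector_mult_inner_transpose transpose_transpose)
    ultimately show ?thesis unfolding b_def by (simp add: inner_diff_left)
  qed
  from this[of "c *\<^sub>R v0 - (transpose F ** F) *v v0"] show ?thesis by simp
qed

lemma lambda_max_transpose_mult:
  fixes F :: "real^'d^'l"
  shows lambda_max_transpose_mult_nonneg: "lambda_max (transpose F ** F) \<ge> 0"
    and norm_matrix_vector_le_lambda_max:
      "(norm (F *v v))\<^sup>2 \<le> lambda_max (transpose F ** F) * (norm v)\<^sup>2"
proof -
  let ?A = "transpose F ** F"
  have cont: "continuous_on (sphere (0::real^'d) 1) (\<lambda>v. (norm (F *v v))\<^sup>2)"
    by (intro continuous_intros linear_continuous_on matrix_vector_mul_linear)
  have "sphere (0::real^'d) 1 \<noteq> {}"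
    using vector_choose_size[of 1] by auto
  then obtain v0 where v0: "v0 \<in> sphere 0 1"
    and max: "\<And>v. v \<in> sphere 0 1 \<Longrightarrow> (norm (F *v v))\<^sup>2 \<le> (norm (F *v v0))\<^sup>2"
    using continuous_attains_sup[OF compact_sphere _ cont] by blast
  define c where "c = (norm (F *v v0))\<^sup>2"
  have bound: "(norm (F *v v))\<^sup>2 \<le> c * (norm v)\<^sup>2" for v
  proof (cases "v = 0")
    case False
    then have "(1 / norm v) *\<^sub>R v \<in> sphere 0 1" by simp
    then have "(norm (F *v ((1 / norm v) *\<^sub>R v)))\<^sup>2 \<le> c" unfolding c_def by (rule max)
    then have "(norm (F *v v))\<^sup>2 / (norm v)\<^sup>2 \<le> c"
      by (simp add: matrix_vector_mult_scaleR power_divide)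
    then show ?thesis using False by (simp add: pos_divide_le_eq)
  qed simp
  have "?A *v v0 = c *\<^sub>R v0" using v0 by (intro rayleigh_maximizer_eigenvector[OF bound]) (auto simp: c_def)
  then have "c \<in> {c. \<exists>v. v \<noteq> 0 \<and> ?A *v v = c *\<^sub>R v}" using v0 by (intro CollectI exI[of _ v0]) auto
  then have c_le: "c \<le> lambda_max ?A" unfolding lambda_max_def
    by (intro Max_ge finite_eigenvalues_symmetric) (simp add: matrix_transpose_mul)
  then show "lambda_max ?A \<ge> 0" unfolding c_def by (rule order_trans[OF zero_le_power2])
  show "(norm (F *v v))\<^sup>2 \<le> lambda_max ?A * (norm v)\<^sup>2"
    using bound[of v] mult_right_mono[OF c_le zero_le_power2[of "norm v"]] by linarith
qed

section \<open>One deterministic primal-dual step\<close>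

lemma closest_point_step:
  fixes S :: "'a::euclidean_space set"
  assumes S: "convex S" "closed S" and p: "p \<in> S"
    and z: "z = closest_point S (u + t *\<^sub>R v)"
  shows "t * (v \<bullet> (z - p)) \<ge> ((norm (u - z))\<^sup>2 + (norm (p - z))\<^sup>2 - (norm (p - u))\<^sup>2) / 2"
proof -
  have "S \<noteq> {}" using p by auto
  then have "z \<in> S" using S(2) z by (simp add: closest_point_in_set)
  then have "(u + t *\<^sub>R v - z) \<bullet> (p - z) \<le> 0"
    using any_closest_point_dot[OF S] p closest_point_le[OF S(2)] z by blast
  moreover have "(u + t *\<^sub>R v - z) \<bullet> (p - z) = (u - z) \<bullet> (p - z) - t * (v \<bullet> (z - p))"
    by (simp add: inner_diff_left inner_diff_right inner_add_left algebra_simps)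
  moreover have "(u - z) \<bullet> (p - z) = ((norm (u - z))\<^sup>2 + (norm (p - z))\<^sup>2 - (norm (p - u))\<^sup>2) / 2"
    using dot_norm_neg[of "u - z" "p - z"] by (simp add: norm_minus_commute)
  ultimately show ?thesis by linarith
qed

text \<open>The dual objective equals a constant minus \<open>\<parallel>v - (y\<^sup>k + s F x\<^sup>k)\<parallel>\<^sup>2 / (2s)\<close>.\<close>
lemma arg_max_prox_eq_closest_point:
  fixes Y :: "(real^'l) set" and F :: "real^'d^'l"
  assumes Y: "convex Y" "closed Y" "Y \<noteq> {}" and s: "s > 0"
  shows "arg_max (\<lambda>v. Psad l F v xk - (1 / (2 * s)) * (norm (v - yk))\<^sup>2) (\<lambda>v. v \<in> Y)
       = closest_point Y (yk + s *\<^sub>R (F *v xk))"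
proof -
  define a where "a = yk + s *\<^sub>R (F *v xk)"
  define K where "K = l xk + yk \<bullet> (F *v xk) + s / 2 * (norm (F *v xk))\<^sup>2"
  let ?f = "\<lambda>v. Psad l F v xk - (1 / (2 * s)) * (norm (v - yk))\<^sup>2"
  have obj: "?f v = K - (1 / (2 * s)) * (dist a v)\<^sup>2" for v
  proof -
    have dist: "(dist a v)\<^sup>2 = (norm (v - yk))\<^sup>2 - 2 * s * (v \<bullet> (F *v xk)) + 2 * s * (yk \<bullet> (F *v xk))
          + s\<^sup>2 * (norm (F *v xk))\<^sup>2"
      unfolding a_def dist_norm power2_norm_eq_inner
      by (simp add: inner_add_left inner_add_right inner_diff_left inner_diff_right algebra_simps
          power2_eq_square inner_commute)
    show ?thesis unfolding dist K_def Psad_def using s by (simp add: field_simps power2_eq_square)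
  qed
  have le_iff: "?f u \<le> ?f v \<longleftrightarrow> dist a v \<le> dist a u" for u v
  proof -
    have "?f u \<le> ?f v \<longleftrightarrow> (dist a v)\<^sup>2 \<le> (dist a u)\<^sup>2" unfolding obj using s by (simp add: field_simps)
    also have "\<dots> \<longleftrightarrow> dist a v \<le> dist a u" by (simp add: power_mono_iff)
    finally show ?thesis .
  qed
  have "is_arg_max ?f (\<lambda>v. v \<in> Y) x \<longleftrightarrow> x = closest_point Y a" for x
  proof
    assume "is_arg_max ?f (\<lambda>v. v \<in> Y) x"
    then have "x \<in> Y" "\<forall>z\<in>Y. dist a x \<le> dist a z"
      unfolding is_arg_max_def using le_iff by (auto simp: not_less)
    then show "x = closest_point Y a" using Y by (intro closest_point_unique) auto
  next
    assume "x = closest_point Y a"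
    moreover have "closest_point Y a \<in> Y" using Y by (intro closest_point_in_set) auto
    moreover have "\<forall>z\<in>Y. dist a (closest_point Y a) \<le> dist a z" using Y closest_point_le by blast
    ultimately show "is_arg_max ?f (\<lambda>v. v \<in> Y) x"
      unfolding is_arg_max_def using le_iff by (auto simp: not_less)
  qed
  then have "(SOME x. is_arg_max ?f (\<lambda>v. v \<in> Y) x) = closest_point Y a" by simp
  then show ?thesis unfolding arg_max_def a_def .
qed

lemma descent_lemma:
  fixes X :: "(real^'d) set" and l :: "real^'d \<Rightarrow> real"
  assumes X: "convex X" and x: "x \<in> X" and y: "y \<in> X"
    and l_grad: "\<And>x. x \<in> X \<Longrightarrow> (l has_derivative (\<lambda>h. gradl x \<bullet> h)) (at x within X)"
    and l_lip: "\<And>x1 x2. x1 \<in> X \<Longrightarrow> x2 \<in> X \<Longrightarrow> norm (gradl x1 - gradl x2) \<le> L * norm (x1 - x2)"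
  shows "l y \<le> l x + gradl x \<bullet> (y - x) + L / 2 * (norm (y - x))\<^sup>2"
proof -
  define d where "d = y - x"
  define p where "p t = x + t *\<^sub>R d" for t :: real
  have pX: "p t \<in> X" if "0 \<le> t" "t \<le> 1" for t
  proof -
    have "p t = (1 - t) *\<^sub>R x + t *\<^sub>R y" unfolding p_def d_def by (simp add: algebra_simps)
    then show ?thesis using convexD_alt[OF X x y, of t] that by simp
  qed
  define \<phi> where "\<phi> t = l (p t) - t * (gradl x \<bullet> d) - L / 2 * t\<^sup>2 * (norm d)\<^sup>2" for t
  define \<phi>' where "\<phi>' t h = gradl (p t) \<bullet> (h *\<^sub>R d) - h * (gradl x \<bullet> d) - (L * t * (norm d)\<^sup>2) * h" for t h
  have "(\<phi> has_derivative \<phi>' t) (at t within {0..1})" if "0 \<le> t" "t \<le> 1" for t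
  proof -
    have "(p has_derivative (\<lambda>h. h *\<^sub>R d)) (at t within {0..1})"
      unfolding p_def by (auto intro!: derivative_eq_intros)
    moreover have "p ` {0..1} \<subseteq> X" using pX by auto
    ultimately have lp: "((\<lambda>t. l (p t)) has_derivative (\<lambda>h. gradl (p t) \<bullet> (h *\<^sub>R d))) (at t within {0..1})"
      using has_derivative_in_compose2[of X l "\<lambda>x h. gradl x \<bullet> h" p "{0..1}" t "\<lambda>h. h *\<^sub>R d"]
        l_grad that by auto
    have lin: "((\<lambda>t. t * (gradl x \<bullet> d)) has_derivative (\<lambda>h. h * (gradl x \<bullet> d))) (at t within {0..1})"
      by (auto intro!: derivative_eq_intros)
    have quad: "((\<lambda>t. L / 2 * t\<^sup>2 * (norm d)\<^sup>2) has_real_derivative (L * t * (norm d)\<^sup>2)) (at t within {0..1})"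
      by (auto intro!: derivative_eq_intros simp: power2_eq_square algebra_simps)
    show ?thesis unfolding \<phi>_def \<phi>'_def
      using has_derivative_diff[OF has_derivative_diff[OF lp lin] quad[unfolded has_field_derivative_def]]
      by simp
  qed
  then obtain t where t: "t \<in> {0..1}" and eq: "\<phi> 1 - \<phi> 0 = \<phi>' t 1"
    using mvt_very_simple[of 0 1 \<phi> \<phi>'] by auto
  have "\<phi>' t 1 = (gradl (p t) - gradl x) \<bullet> d - L * t * (norm d)\<^sup>2"
    unfolding \<phi>'_def by (simp add: inner_diff_left)
  also have "\<dots> \<le> norm (gradl (p t) - gradl x) * norm d - L * t * (norm d)\<^sup>2"
    using norm_cauchy_schwarz by simp
  also have "\<dots> \<le> L * norm (p t - x) * norm d - L * t * (norm d)\<^sup>2"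
    using l_lip[OF pX x] t by (auto intro: mult_right_mono)
  also have "\<dots> = 0" using t unfolding p_def by (simp add: power2_eq_square)
  finally have "\<phi> 1 \<le> \<phi> 0" using eq by simp
  then show ?thesis unfolding \<phi>_def p_def d_def by (simp add: algebra_simps)
qed

lemma lipschitz_negative_constant_singleton:
  assumes lip: "\<And>x1 x2. x1 \<in> X \<Longrightarrow> x2 \<in> X \<Longrightarrow> norm (f x1 - f x2) \<le> L * norm (x1 - x2)"
    and L: "L < 0" and x: "x \<in> X"
  shows "X = {x}"
proof -
  have "y = x" if "y \<in> X" for y
  proof -
    have "0 \<le> L * norm (y - x)" using lip[OF that x] norm_ge_zero order_trans by blast
    then have "norm (y - x) \<le> 0" using L by (simp add: zero_le_mult_iff)
    then show ?thesis by simp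
  qed
  then show ?thesis using x by blast
qed

lemma completing_square_lower_bound:
  fixes a b m t :: real
  assumes a: "a > 0"
  shows "a * t\<^sup>2 - (b + m) * t \<ge> - (b\<^sup>2 + m\<^sup>2) / (2 * a)"
proof -
  define P where "P = (a * t\<^sup>2 - (b + m) * t) * (2 * a)"
  have "(2 * a * t - (b + m))\<^sup>2 + (b - m)\<^sup>2 = 2 * (P + (b\<^sup>2 + m\<^sup>2))"
    unfolding P_def by (simp add: algebra_simps power2_eq_square)
  then have "0 \<le> 2 * (P + (b\<^sup>2 + m\<^sup>2))" by (metis add_nonneg_nonneg zero_le_power2)
  then have "- (b\<^sup>2 + m\<^sup>2) \<le> P" by argo
  then show ?thesis using a unfolding P_def by (subst pos_divide_le_eq) auto
qed

lemma cross_terms_lower_bound: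
  fixes F :: "real^'d^'l" and Y :: "(real^'l) set" and a :: real
  assumes Y: "bounded Y" and y: "y \<in> Y" "y' \<in> Y" and a: "a > 0"
  shows "a * (norm d)\<^sup>2 + \<delta> \<bullet> d + (y - y') \<bullet> (F *v d)
    \<ge> - (lambda_max (transpose F ** F) * (diameter Y)\<^sup>2 + (norm \<delta>)\<^sup>2) / (2 * a)"
proof -
  define lam where "lam = lambda_max (transpose F ** F)"
  define D where "D = diameter Y"
  have lam: "lam \<ge> 0" unfolding lam_def by (rule lambda_max_transpose_mult_nonneg)
  have "norm (F *v d) \<le> sqrt lam * norm d"
    using real_sqrt_le_mono[OF norm_matrix_vector_le_lambda_max[of F d]]
    unfolding lam_def by (simp add: real_sqrt_mult)
  moreover have "norm (y - y') \<le> D"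
    using diameter_bounded_bound[OF Y y] unfolding D_def by (simp add: dist_norm)
  ultimately have "norm (y' - y) * norm (F *v d) \<le> D * (sqrt lam * norm d)"
    by (intro mult_mono) (auto simp: norm_minus_commute intro: order_trans[OF norm_ge_zero])
  moreover have "(y' - y) \<bullet> (F *v d) \<le> norm (y' - y) * norm (F *v d)" by (rule norm_cauchy_schwarz)
  moreover have "(y - y') \<bullet> (F *v d) = - ((y' - y) \<bullet> (F *v d))"
    by (simp only: inner_minus_left[symmetric] minus_diff_eq)
  moreover have "D * (sqrt lam * norm d) = sqrt lam * D * norm d" by (simp only: mult_ac)
  moreover have "\<delta> \<bullet> d \<ge> - (norm \<delta> * norm d)"
    using norm_cauchy_schwarz[of "- \<delta>" d] by simp
  moreover have "(sqrt lam * D)\<^sup>2 = lam * D\<^sup>2" using lam by (simp add: power_mult_distrib)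
  then have "a * (norm d)\<^sup>2 - (sqrt lam * D + norm \<delta>) * norm d \<ge> - (lam * D\<^sup>2 + (norm \<delta>)\<^sup>2) / (2 * a)"
    using completing_square_lower_bound[OF a, of "sqrt lam * D" "norm \<delta>" "norm d"] by simp
  ultimately show ?thesis unfolding lam_def[symmetric] D_def[symmetric] distrib_right by linarith
qed

lemma pdhg_step_inequality:
  fixes X :: "(real^'d) set" and Y :: "(real^'l) set" and F :: "real^'d^'l"
    and l :: "real^'d \<Rightarrow> real" and gradl :: "real^'d \<Rightarrow> real^'d"
  assumes X: "convex X" "closed X" and Y: "convex Y" "closed Y" "bounded Y"
    and l_grad: "\<And>x. x \<in> X \<Longrightarrow> (l has_derivative (\<lambda>h. gradl x \<bullet> h)) (at x within X)"
    and l_lip: "\<And>x1 x2. x1 \<in> X \<Longrightarrow> x2 \<in> X \<Longrightarrow> norm (gradl x1 - gradl x2) \<le> L * norm (x1 - x2)"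
    and l_strong: "l xs - l xk - (xs - xk) \<bullet> gradl xk \<ge> \<mu> / 2 * (norm (xs - xk))\<^sup>2"
    and s: "s > 0" and beta: "beta > 0" "L < 1 / beta"
    and xk: "xk \<in> X" and xs: "xs \<in> X" and ys: "ys \<in> Y"
    and y': "y' = closest_point Y (yk + s *\<^sub>R (F *v xk))"
    and x': "x' = closest_point X (xk - beta *\<^sub>R (gk + transpose F *v y'))"
  shows "Psad l F y' xs - Psad l F ys x' \<ge>
      1 / (2 * beta) * (norm (xs - x'))\<^sup>2 + 1 / (2 * s) * (norm (ys - y'))\<^sup>2
    - (1 / (2 * beta) - \<mu> / 2) * (norm (xs - xk))\<^sup>2 - 1 / (2 * s) * (norm (ys - yk))\<^sup>2
    - (gk - gradl xk) \<bullet> (xs - xk)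
    - (lambda_max (transpose F ** F) * (diameter Y)\<^sup>2 + (norm (gk - gradl xk))\<^sup>2) / (1 / beta - L)"
proof -
  define c where "c = 1 / (2 * beta)"
  define d where "d = x' - xk"
  define \<delta> where "\<delta> = gk - gradl xk"
  define err where "err = lambda_max (transpose F ** F) * (diameter Y)\<^sup>2 + (norm \<delta>)\<^sup>2"
  have x'X: "x' \<in> X" using X(2) xk x' by (auto intro: closest_point_in_set)
  have y'Y: "y' \<in> Y" using Y(2) ys y' by (auto intro: closest_point_in_set)
  have primal: "gk \<bullet> (xs - x') + y' \<bullet> (F *v xs) - y' \<bullet> (F *v x')
      \<ge> c * (norm d)\<^sup>2 + c * (norm (xs - x'))\<^sup>2 - c * (norm (xs - xk))\<^sup>2"
  proof -
    define G where "G = gk + transpose F *v y'"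
    have "x' = closest_point X (xk + beta *\<^sub>R (- G))"
      unfolding x' G_def by (simp only: scaleR_minus_right diff_conv_add_uminus)
    from closest_point_step[OF X xs this]
    have "beta * (G \<bullet> (xs - x')) \<ge> ((norm d)\<^sup>2 + (norm (xs - x'))\<^sup>2 - (norm (xs - xk))\<^sup>2) / 2"
      by (simp add: d_def norm_minus_commute inner_diff_right)
    then have "c * ((norm d)\<^sup>2 + (norm (xs - x'))\<^sup>2 - (norm (xs - xk))\<^sup>2) \<le> G \<bullet> (xs - x')"
      using beta(1) unfolding c_def by (simp add: field_simps)
    moreover have "G \<bullet> (xs - x') = gk \<bullet> (xs - x') + y' \<bullet> (F *v xs) - y' \<bullet> (F *v x')"
      unfolding G_def by (simp add: inner_add_left dot_lmul_matrix matrix_vector_mult_diff_distrib inner_diff_right)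
    ultimately show ?thesis by (simp add: algebra_simps)
  qed
  have dual: "(F *v xk) \<bullet> y' - (F *v xk) \<bullet> ys
      \<ge> 1 / (2 * s) * (norm (ys - y'))\<^sup>2 - 1 / (2 * s) * (norm (ys - yk))\<^sup>2"
  proof -
    have "s * ((F *v xk) \<bullet> (y' - ys)) \<ge> ((norm (yk - y'))\<^sup>2 + (norm (ys - y'))\<^sup>2 - (norm (ys - yk))\<^sup>2) / 2"
      by (rule closest_point_step[OF Y(1,2) ys y'])
    then have "(norm (ys - y'))\<^sup>2 - (norm (ys - yk))\<^sup>2 \<le> 2 * s * ((F *v xk) \<bullet> (y' - ys))"
      using zero_le_power2[of "norm (yk - y')"] by argo
    then show ?thesis using s by (simp add: inner_diff_right field_simps)
  qed
  have "l xs - l x' \<ge> gk \<bullet> (xs - x') - \<delta> \<bullet> (xs - xk) + \<delta> \<bullet> d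
      + \<mu> / 2 * (norm (xs - xk))\<^sup>2 - L / 2 * (norm d)\<^sup>2"
  proof -
    have "gradl xk \<bullet> (xs - xk) - gradl xk \<bullet> d = gk \<bullet> (xs - x') - \<delta> \<bullet> (xs - xk) + \<delta> \<bullet> d"
      unfolding \<delta>_def d_def by (simp add: inner_diff_left inner_diff_right)
    moreover have "l x' \<le> l xk + gradl xk \<bullet> d + L / 2 * (norm d)\<^sup>2"
      using descent_lemma[OF X(1) xk x'X l_grad l_lip] unfolding d_def .
    ultimately show ?thesis using l_strong by (simp add: inner_commute)
  qed
  moreover have "y' \<bullet> (F *v xs) - ys \<bullet> (F *v x') \<ge> - (gk \<bullet> (xs - x'))
      + c * (norm d)\<^sup>2 + c * (norm (xs - x'))\<^sup>2 - c * (norm (xs - xk))\<^sup>2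
      + 1 / (2 * s) * (norm (ys - y'))\<^sup>2 - 1 / (2 * s) * (norm (ys - yk))\<^sup>2 + (y' - ys) \<bullet> (F *v d)"
  proof -
    have "y' \<bullet> (F *v x') - ys \<bullet> (F *v x') = (F *v xk) \<bullet> y' - (F *v xk) \<bullet> ys + (y' - ys) \<bullet> (F *v d)"
      unfolding d_def by (simp add: matrix_vector_mult_diff_distrib inner_diff_left inner_diff_right inner_commute)
    then show ?thesis using primal dual by linarith
  qed
  moreover have "(c - L / 2) * (norm d)\<^sup>2 + \<delta> \<bullet> d + (y' - ys) \<bullet> (F *v d) \<ge> - err / (1 / beta - L)"
  proof -
    have a: "c - L / 2 > 0" and a2: "2 * (c - L / 2) = 1 / beta - L"
      using beta unfolding c_def by (simp_all add: field_simps)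
    show ?thesis using cross_terms_lower_bound[OF Y(3) y'Y ys a] unfolding err_def a2 .
  qed
  ultimately have "Psad l F y' xs - Psad l F ys x' \<ge>
      c * (norm (xs - x'))\<^sup>2 + 1 / (2 * s) * (norm (ys - y'))\<^sup>2
    - (c * (norm (xs - xk))\<^sup>2 - \<mu> / 2 * (norm (xs - xk))\<^sup>2) - 1 / (2 * s) * (norm (ys - yk))\<^sup>2
    - \<delta> \<bullet> (xs - xk) - err / (1 / beta - L)"
    unfolding Psad_def left_diff_distrib by linarith
  then show ?thesis unfolding c_def err_def \<delta>_def left_diff_distrib .
qed

section \<open>The iterates as functions of the samples\<close>

lemma spdhg_Suc_closest_point:
  fixes X :: "(real^'d) set" and Y :: "(real^'l) set" and F :: "real^'d^'l"
  assumes Y: "convex Y" "closed Y" "Y \<noteq> {}" and s: "s > 0"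
  shows "spdhg X Y F l g s beta x0 y0 xs (Suc k) =
    (let yk = fst (spdhg X Y F l g s beta x0 y0 xs k);
         xk = snd (spdhg X Y F l g s beta x0 y0 xs k);
         y' = closest_point Y (yk + s *\<^sub>R (F *v xk))
     in (y', closest_point X (xk - beta (Suc k) *\<^sub>R (g xk (xs k) + transpose F *v y'))))"
  by (simp only: spdhg.simps Let_def arg_max_prox_eq_closest_point[OF Y s])

lemma spdhg_in_domain:
  fixes X :: "(real^'d) set" and Y :: "(real^'l) set" and F :: "real^'d^'l"
  assumes X: "closed X" "X \<noteq> {}" and Y: "convex Y" "closed Y" "Y \<noteq> {}" and s: "s > 0"
    and x0: "x0 \<in> X" and y0: "y0 \<in> Y"
  shows "fst (spdhg X Y F l g s beta x0 y0 xs j) \<in> Y \<and> snd (spdhg X Y F l g s beta x0 y0 xs j) \<in> X"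
proof (cases j)
  case (Suc k) then show ?thesis
    using X Y by (simp add: spdhg_Suc_closest_point[OF Y s] Let_def closest_point_in_set del: spdhg.simps)
qed (use x0 y0 in simp)

lemma spdhg_cong_prefix:
  assumes "\<And>n. n < j \<Longrightarrow> xs n = xs' n"
  shows "spdhg X Y F l g s beta x0 y0 xs j = spdhg X Y F l g s beta x0 y0 xs' j"
  using assms
proof (induction j)
  case (Suc j)
  then have "spdhg X Y F l g s beta x0 y0 xs j = spdhg X Y F l g s beta x0 y0 xs' j" "xs j = xs' j"
    by simp_all
  then show ?case by (simp only: spdhg.simps)
qed simp

lemma borel_measurable_closest_point:
  fixes S :: "'a::euclidean_space set"
  assumes "convex S" "closed S" "S \<noteq> {}" "f \<in> borel_measurable N"
  shows "(\<lambda>z. closest_point S (f z)) \<in> borel_measurable N"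
  using borel_measurable_continuous_on[OF continuous_on_closest_point[OF assms(1-3)] assms(4)] .

lemma borel_measurable_matrix_vector_mult:
  fixes A :: "real^'n^'m"
  assumes "f \<in> borel_measurable N"
  shows "(\<lambda>z. A *v f z) \<in> borel_measurable N"
  using borel_measurable_continuous_on[OF _ assms] matrix_vector_mul_linear linear_continuous_on
  by blast

lemma spdhg_measurable:
  fixes X :: "(real^'d) set" and Y :: "(real^'l) set" and F :: "real^'d^'l"
    and g :: "real^'d \<Rightarrow> 'e \<Rightarrow> real^'d" and E :: "'e measure"
  assumes X: "convex X" "closed X" "X \<noteq> {}" and Y: "convex Y" "closed Y" "Y \<noteq> {}" and s: "s > 0"
    and g_meas: "(\<lambda>(x, e). g x e) \<in> borel_measurable (borel \<Otimes>\<^sub>M E)"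
  shows "j \<le> k \<Longrightarrow>
      (\<lambda>z. fst (spdhg X Y F l g s beta x0 y0 z j)) \<in> borel_measurable (PiM {..<k} (\<lambda>_. E)) \<and>
      (\<lambda>z. snd (spdhg X Y F l g s beta x0 y0 z j)) \<in> borel_measurable (PiM {..<k} (\<lambda>_. E))"
proof (induction j)
  case (Suc j)
  let ?P = "PiM {..<k} (\<lambda>_. E)"
  let ?y = "\<lambda>z. fst (spdhg X Y F l g s beta x0 y0 z j)"
  let ?x = "\<lambda>z. snd (spdhg X Y F l g s beta x0 y0 z j)"
  let ?y' = "\<lambda>z. closest_point Y (?y z + s *\<^sub>R (F *v ?x z))"
  have y: "?y \<in> borel_measurable ?P" and x: "?x \<in> borel_measurable ?P" using Suc by auto
  have "(\<lambda>z. ?y z + s *\<^sub>R (F *v ?x z)) \<in> borel_measurable ?P"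
    using y borel_measurable_matrix_vector_mult[OF x] by measurable
  then have y': "?y' \<in> borel_measurable ?P" by (rule borel_measurable_closest_point[OF Y])
  have "j \<in> {..<k}" using Suc.prems by simp
  then have "(\<lambda>z. (?x z, z j)) \<in> measurable ?P (borel \<Otimes>\<^sub>M E)"
    using x measurable_component_singleton by (rule_tac measurable_Pair) auto
  from measurable_compose[OF this g_meas] have "(\<lambda>z. g (?x z) (z j)) \<in> borel_measurable ?P"
    by simp
  then have "(\<lambda>z. ?x z - beta (Suc j) *\<^sub>R (g (?x z) (z j) + transpose F *v ?y' z)) \<in> borel_measurable ?P"
    using x borel_measurable_matrix_vector_mult[OF y'] by measurable
  then have "(\<lambda>z. closest_point X (?x z - beta (Suc j) *\<^sub>R (g (?x z) (z j) + transpose F *v ?y' z)))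
      \<in> borel_measurable ?P"
    by (rule borel_measurable_closest_point[OF X])
  then show ?case using y' by (simp add: spdhg_Suc_closest_point[OF Y s] Let_def del: spdhg.simps)
qed simp

section \<open>Integration against independent samples\<close>

lemma measurable_continuous_on_comp:
  fixes f :: "'a::topological_space \<Rightarrow> 'b::topological_space"
  assumes f: "continuous_on K f" and Z: "Z \<in> borel_measurable N" "\<And>\<omega>. \<omega> \<in> space N \<Longrightarrow> Z \<omega> \<in> K"
  shows "(\<lambda>\<omega>. f (Z \<omega>)) \<in> borel_measurable N"
proof -
  have "Z \<in> measurable N (restrict_space borel K)"
    using Z by (intro measurable_restrict_space2) auto
  then show ?thesis using borel_measurable_continuous_on_restrict[OF f] by (rule measurable_compose)
qed

lemma (in finite_measure) integrable_continuous_on_compact_comp: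
  fixes f :: "'b::metric_space \<Rightarrow> real"
  assumes K: "compact K" and f: "continuous_on K f"
    and Z: "Z \<in> borel_measurable M" "\<And>\<omega>. \<omega> \<in> space M \<Longrightarrow> Z \<omega> \<in> K"
  shows "integrable M (\<lambda>\<omega>. f (Z \<omega>))"
proof -
  obtain B where B: "\<And>x. x \<in> K \<Longrightarrow> norm (f x) \<le> B"
    using compact_imp_bounded[OF compact_continuous_image[OF f K]] unfolding bounded_iff by auto
  show ?thesis
    using measurable_continuous_on_comp[OF f Z] B Z(2) by (intro integrable_const_bound[where B=B]) auto
qed

text \<open>Fubini for the joint law of \<open>(W, Xi)\<close>, which is a product law by independence.\<close>
lemma (in prob_space) indep_var_nn_integral_le:
  fixes f :: "'b \<times> 'b \<Rightarrow> ennreal"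
  assumes ind: "indep_var N W E Xi" and Xi0: "Xi0 \<in> measurable M E"
    and same: "distr M E Xi = distr M E Xi0"
    and f: "f \<in> borel_measurable (N \<Otimes>\<^sub>M E)"
    and bound: "\<And>w. w \<in> space N \<Longrightarrow> (\<integral>\<^sup>+ \<omega>. f (w, Xi0 \<omega>) \<partial>M) \<le> C"
  shows "(\<integral>\<^sup>+ \<omega>. f (W \<omega>, Xi \<omega>) \<partial>M) \<le> C"
proof -
  let ?PW = "distr M N W" and ?P0 = "distr M E Xi0"
  have W: "W \<in> measurable M N" and Xi: "Xi \<in> measurable M E"
    using indep_var_rv1[OF ind] indep_var_rv2[OF ind] by auto
  interpret PW: prob_space ?PW by (rule prob_space_distr[OF W])
  interpret P0: prob_space ?P0 by (rule prob_space_distr[OF Xi0])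
  have joint: "?PW \<Otimes>\<^sub>M ?P0 = distr M (N \<Otimes>\<^sub>M E) (\<lambda>\<omega>. (W \<omega>, Xi \<omega>))"
    using ind same indep_var_distribution_eq by metis
  have "(\<integral>\<^sup>+ \<omega>. f (W \<omega>, Xi \<omega>) \<partial>M) = (\<integral>\<^sup>+ p. f p \<partial>(?PW \<Otimes>\<^sub>M ?P0))"
    unfolding joint using W Xi f by (subst nn_integral_distr) auto
  also have "\<dots> = (\<integral>\<^sup>+ w. (\<integral>\<^sup>+ e. f (w, e) \<partial>?P0) \<partial>?PW)"
    using f by (subst P0.nn_integral_fst[symmetric]) auto
  also have "\<dots> \<le> (\<integral>\<^sup>+ w. C \<partial>?PW)"
  proof (rule nn_integral_mono)
    fix w assume "w \<in> space ?PW"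
    then have w: "w \<in> space N" by simp
    have "(\<integral>\<^sup>+ e. f (w, e) \<partial>?P0) = (\<integral>\<^sup>+ \<omega>. f (w, Xi0 \<omega>) \<partial>M)"
      using Xi0 f w by (subst nn_integral_distr) auto
    then show "(\<integral>\<^sup>+ e. f (w, e) \<partial>?P0) \<le> C" using bound[OF w] by simp
  qed
  also have "\<dots> = C" using PW.emeasure_space_1 by simp
  finally show ?thesis .
qed

lemma (in prob_space) indep_var_integral_eq_0:
  fixes f :: "'b \<times> 'b \<Rightarrow> real"
  assumes ind: "indep_var N W E Xi" and Xi0: "Xi0 \<in> measurable M E"
    and same: "distr M E Xi = distr M E Xi0"
    and f: "f \<in> borel_measurable (N \<Otimes>\<^sub>M E)"
    and int: "integrable M (\<lambda>\<omega>. f (W \<omega>, Xi \<omega>))"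
    and zero: "\<And>w. w \<in> space N \<Longrightarrow> (\<integral>\<omega>. f (w, Xi0 \<omega>) \<partial>M) = 0"
  shows "(\<integral>\<omega>. f (W \<omega>, Xi \<omega>) \<partial>M) = 0"
proof -
  let ?PW = "distr M N W" and ?P0 = "distr M E Xi0"
  have W: "W \<in> measurable M N" and Xi: "Xi \<in> measurable M E"
    using indep_var_rv1[OF ind] indep_var_rv2[OF ind] by auto
  interpret PW: prob_space ?PW by (rule prob_space_distr[OF W])
  interpret P0: prob_space ?P0 by (rule prob_space_distr[OF Xi0])
  interpret PP: pair_sigma_finite ?PW ?P0 ..
  have joint: "?PW \<Otimes>\<^sub>M ?P0 = distr M (N \<Otimes>\<^sub>M E) (\<lambda>\<omega>. (W \<omega>, Xi \<omega>))"
    using ind same indep_var_distribution_eq by metis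
  have WXi: "(\<lambda>\<omega>. (W \<omega>, Xi \<omega>)) \<in> measurable M (N \<Otimes>\<^sub>M E)" using W Xi by (rule measurable_Pair)
  have "integrable (?PW \<Otimes>\<^sub>M ?P0) f"
    unfolding joint integrable_distr_eq[OF WXi f] by (rule int)
  then have "(\<integral>p. f p \<partial>(?PW \<Otimes>\<^sub>M ?P0)) = (\<integral>w. (\<integral>e. f (w, e) \<partial>?P0) \<partial>?PW)"
    by (rule PP.integral_fst'[symmetric])
  also have "\<dots> = (\<integral>w. 0 \<partial>?PW)"
  proof (rule Bochner_Integration.integral_cong[OF refl])
    fix w assume "w \<in> space ?PW"
    then have w: "w \<in> space N" by simp
    have "(\<integral>e. f (w, e) \<partial>?P0) = (\<integral>\<omega>. f (w, Xi0 \<omega>) \<partial>M)"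
      using Xi0 f w by (subst integral_distr) auto
    then show "(\<integral>e. f (w, e) \<partial>?P0) = 0" using zero[OF w] by simp
  qed
  finally show ?thesis unfolding joint using WXi f by (subst (asm) integral_distr) auto
qed

section \<open>The expected one-step inequality\<close>

locale spdhg_sampling = prob_space M
  for M :: "'w measure" +
  fixes X :: "(real^'d) set" and Y :: "(real^'l) set" and F :: "real^'d^'l"
    and l :: "real^'d \<Rightarrow> real" and gradl :: "real^'d \<Rightarrow> real^'d"
    and g :: "real^'d \<Rightarrow> 'e \<Rightarrow> real^'d" and E :: "'e measure" and \<xi> :: "nat \<Rightarrow> 'w \<Rightarrow> 'e"
    and \<sigma> s :: real and beta :: "nat \<Rightarrow> real" and x0 :: "real^'d" and y0 :: "real^'l"
  assumes X: "convex X" "compact X" "X \<noteq> {}"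
    and Y: "convex Y" "compact Y" "Y \<noteq> {}"
    and s_pos: "s > 0" and x0: "x0 \<in> X" and y0: "y0 \<in> Y"
    and gradl_cont: "continuous_on X gradl"
    and xi_rv: "\<And>n. \<xi> n \<in> measurable M E"
    and xi_indep: "indep_vars (\<lambda>_. E) \<xi> UNIV"
    and xi_ident: "\<And>n. distr M E (\<xi> n) = distr M E (\<xi> 0)"
    and g_meas: "(\<lambda>(x, e). g x e) \<in> borel_measurable (borel \<Otimes>\<^sub>M E)"
    and g_int: "\<And>x. x \<in> X \<Longrightarrow> integrable M (\<lambda>\<omega>. g x (\<xi> 0 \<omega>))"
    and g_unbiased: "\<And>x. x \<in> X \<Longrightarrow> (\<integral>\<omega>. g x (\<xi> 0 \<omega>) \<partial>M) = gradl x"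
    and g_var_int: "\<And>x. x \<in> X \<Longrightarrow> integrable M (\<lambda>\<omega>. (norm (g x (\<xi> 0 \<omega>) - gradl x))\<^sup>2)"
    and g_var: "\<And>x. x \<in> X \<Longrightarrow> (\<integral>\<omega>. (norm (g x (\<xi> 0 \<omega>) - gradl x))\<^sup>2 \<partial>M) \<le> \<sigma>\<^sup>2"
begin

definition yit :: "nat \<Rightarrow> 'w \<Rightarrow> real^'l" where
  "yit j \<omega> = fst (spdhg X Y F l g s beta x0 y0 (\<lambda>n. \<xi> n \<omega>) j)"

definition xit :: "nat \<Rightarrow> 'w \<Rightarrow> real^'d" where
  "xit j \<omega> = snd (spdhg X Y F l g s beta x0 y0 (\<lambda>n. \<xi> n \<omega>) j)"

definition noise :: "nat \<Rightarrow> 'w \<Rightarrow> real^'d" where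
  "noise k \<omega> = g (xit k \<omega>) (\<xi> k \<omega>) - gradl (xit k \<omega>)"

definition history :: "nat \<Rightarrow> 'w \<Rightarrow> nat \<Rightarrow> 'e" where
  "history j \<omega> = restrict (\<lambda>n. \<xi> n \<omega>) {..<j}"

lemma X_closed: "closed X" and Y_closed: "closed Y" and Y_bounded: "bounded Y"
  using X(2) Y(2) by (auto intro: compact_imp_closed compact_imp_bounded)

lemma yit_Suc: "yit (Suc k) \<omega> = closest_point Y (yit k \<omega> + s *\<^sub>R (F *v xit k \<omega>))"
  and xit_Suc: "xit (Suc k) \<omega> =
    closest_point X (xit k \<omega> - beta (Suc k) *\<^sub>R (g (xit k \<omega>) (\<xi> k \<omega>) + transpose F *v yit (Suc k) \<omega>))"
  unfolding yit_def xit_def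
  by (simp_all add: spdhg_Suc_closest_point[OF Y(1) Y_closed Y(3) s_pos] Let_def del: spdhg.simps)

lemma yit_in: "yit j \<omega> \<in> Y" and xit_in: "xit j \<omega> \<in> X"
  unfolding yit_def xit_def
  using spdhg_in_domain[OF X_closed X(3) Y(1) Y_closed Y(3) s_pos x0 y0, of F l g beta "\<lambda>n. \<xi> n \<omega>" j]
  by simp_all

lemma history_measurable: "history j \<in> measurable M (PiM {..<j} (\<lambda>_. E))"
  unfolding history_def by (rule measurable_restrict) (rule xi_rv)

lemma spdhg_history:
  "spdhg X Y F l g s beta x0 y0 (\<lambda>n. \<xi> n \<omega>) j = spdhg X Y F l g s beta x0 y0 (history j \<omega>) j"
  unfolding history_def by (rule spdhg_cong_prefix) simp

lemma yit_measurable[measurable]: "yit j \<in> borel_measurable M"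
  and xit_measurable[measurable]: "xit j \<in> borel_measurable M"
proof -
  have "yit j = (\<lambda>\<omega>. fst (spdhg X Y F l g s beta x0 y0 (history j \<omega>) j))"
    "xit j = (\<lambda>\<omega>. snd (spdhg X Y F l g s beta x0 y0 (history j \<omega>) j))"
    by (simp_all add: fun_eq_iff yit_def xit_def spdhg_history)
  then show "yit j \<in> borel_measurable M" "xit j \<in> borel_measurable M"
    using measurable_compose[OF history_measurable
        spdhg_measurable[OF X(1) X_closed X(3) Y(1) Y_closed Y(3) s_pos g_meas order.refl, THEN conjunct1]]
      measurable_compose[OF history_measurable
        spdhg_measurable[OF X(1) X_closed X(3) Y(1) Y_closed Y(3) s_pos g_meas order.refl, THEN conjunct2]]
    by simp_all
qed

lemma integrable_yit:
  fixes f :: "real^'l \<Rightarrow> real"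
  shows "continuous_on Y f \<Longrightarrow> integrable M (\<lambda>\<omega>. f (yit j \<omega>))"
  using Y(2) yit_in by (auto intro: integrable_continuous_on_compact_comp)

lemma integrable_xit:
  fixes f :: "real^'d \<Rightarrow> real"
  shows "continuous_on X f \<Longrightarrow> integrable M (\<lambda>\<omega>. f (xit j \<omega>))"
  using X(2) xit_in by (auto intro: integrable_continuous_on_compact_comp)

text \<open>\<open>sample k \<omega>\<close> is \<open>\<xi>\<^sub>k \<omega>\<close> as a function on \<open>{k}\<close>: \<open>indep_var\<close> requires both variables
  to take values in the same type as \<open>history k \<omega>\<close>.\<close>
definition sample :: "nat \<Rightarrow> 'w \<Rightarrow> nat \<Rightarrow> 'e" where
  "sample k \<omega> = restrict (\<lambda>n. \<xi> n \<omega>) {k}"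

lemma history_indep_sample: "indep_var (PiM {..<k} (\<lambda>_. E)) (history k) (PiM {k} (\<lambda>_. E)) (sample k)"
  unfolding history_def sample_def using indep_var_restrict[OF xi_indep, of "{..<k}" "{k}"] by auto

lemma sample_measurable: "sample k \<in> measurable M (PiM {k} (\<lambda>_. E))"
  and sample0_measurable: "(\<lambda>\<omega>. restrict (\<lambda>n. \<xi> 0 \<omega>) {k}) \<in> measurable M (PiM {k} (\<lambda>_. E))"
  unfolding sample_def by (rule measurable_restrict, rule xi_rv)+

lemma distr_sample:
  "distr M (PiM {k} (\<lambda>_. E)) (sample k) = distr M (PiM {k} (\<lambda>_. E)) (\<lambda>\<omega>. restrict (\<lambda>n. \<xi> 0 \<omega>) {k})"
proof -
  define const where "const e = restrict (\<lambda>n. e) {k}" for e :: 'e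
  have const: "const \<in> measurable E (PiM {k} (\<lambda>_. E))" unfolding const_def by (rule measurable_restrict) simp
  have "sample k = const \<circ> \<xi> k" "(\<lambda>\<omega>. restrict (\<lambda>n. \<xi> 0 \<omega>) {k}) = const \<circ> \<xi> 0"
    unfolding sample_def const_def by (auto simp: fun_eq_iff restrict_def)
  then show ?thesis
    using distr_distr[OF const xi_rv, of k] distr_distr[OF const xi_rv, of 0] xi_ident[of k] by simp
qed

definition x_of_history :: "nat \<Rightarrow> (nat \<Rightarrow> 'e) \<Rightarrow> real^'d" where
  "x_of_history k u = snd (spdhg X Y F l g s beta x0 y0 u k)"

definition noise_of_history :: "nat \<Rightarrow> (nat \<Rightarrow> 'e) \<times> (nat \<Rightarrow> 'e) \<Rightarrow> real^'d" where
  "noise_of_history k p = g (x_of_history k (fst p)) (snd p k) - gradl (x_of_history k (fst p))"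

lemma x_of_history_in: "x_of_history k u \<in> X"
  unfolding x_of_history_def
  by (rule spdhg_in_domain[OF X_closed X(3) Y(1) Y_closed Y(3) s_pos x0 y0, THEN conjunct2])

lemma xit_eq_x_of_history: "xit k \<omega> = x_of_history k (history k \<omega>)"
  unfolding xit_def x_of_history_def spdhg_history ..

lemma noise_eq_noise_of_history: "noise k \<omega> = noise_of_history k (history k \<omega>, sample k \<omega>)"
  unfolding noise_def noise_of_history_def xit_eq_x_of_history by (simp add: sample_def)

lemma x_of_history_fst_measurable[measurable]:
  "(\<lambda>p. x_of_history k (fst p)) \<in> borel_measurable (PiM {..<k} (\<lambda>_. E) \<Otimes>\<^sub>M PiM {k} (\<lambda>_. E))"
proof -
  have "x_of_history k \<in> borel_measurable (PiM {..<k} (\<lambda>_. E))"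
    unfolding x_of_history_def
    by (rule spdhg_measurable[OF X(1) X_closed X(3) Y(1) Y_closed Y(3) s_pos g_meas order.refl, THEN conjunct2])
  then show ?thesis by measurable
qed

lemma noise_of_history_measurable[measurable]:
  "noise_of_history k \<in> borel_measurable (PiM {..<k} (\<lambda>_. E) \<Otimes>\<^sub>M PiM {k} (\<lambda>_. E))"
proof -
  let ?P = "PiM {..<k} (\<lambda>_. E) \<Otimes>\<^sub>M PiM {k} (\<lambda>_. E)"
  have "(\<lambda>p. snd p k) \<in> measurable ?P E"
    using measurable_compose[OF measurable_snd measurable_component_singleton[of k "{k}"]] by simp
  then have "(\<lambda>p. (x_of_history k (fst p), snd p k)) \<in> measurable ?P (borel \<Otimes>\<^sub>M E)"
    by (intro measurable_Pair x_of_history_fst_measurable)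
  from measurable_compose[OF this g_meas]
  have "(\<lambda>p. g (x_of_history k (fst p)) (snd p k)) \<in> borel_measurable ?P" by simp
  moreover have "(\<lambda>p. gradl (x_of_history k (fst p))) \<in> borel_measurable ?P"
    using measurable_continuous_on_comp[OF gradl_cont x_of_history_fst_measurable] x_of_history_in
    by simp
  ultimately show ?thesis unfolding noise_of_history_def[abs_def] by (rule borel_measurable_diff)
qed

lemma noise_measurable[measurable]: "noise k \<in> borel_measurable M"
  unfolding noise_eq_noise_of_history[abs_def]
  by (rule measurable_compose[OF measurable_Pair[OF history_measurable sample_measurable]
        noise_of_history_measurable])

lemma noise_second_moment:
  shows "integrable M (\<lambda>\<omega>. (norm (noise k \<omega>))\<^sup>2)"
    and "(\<integral>\<omega>. (norm (noise k \<omega>))\<^sup>2 \<partial>M) \<le> \<sigma>\<^sup>2"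
proof -
  have "(\<integral>\<^sup>+\<omega>. ennreal ((norm (noise_of_history k (history k \<omega>, sample k \<omega>)))\<^sup>2) \<partial>M) \<le> ennreal (\<sigma>\<^sup>2)"
  proof (rule indep_var_nn_integral_le[OF history_indep_sample sample0_measurable distr_sample])
    fix u
    have x: "x_of_history k u \<in> X" by (rule x_of_history_in)
    have "(\<integral>\<^sup>+\<omega>. ennreal ((norm (noise_of_history k (u, restrict (\<lambda>n. \<xi> 0 \<omega>) {k})))\<^sup>2) \<partial>M)
        = ennreal (\<integral>\<omega>. (norm (g (x_of_history k u) (\<xi> 0 \<omega>) - gradl (x_of_history k u)))\<^sup>2 \<partial>M)"
      unfolding noise_of_history_def by (simp add: nn_integral_eq_integral[OF g_var_int[OF x]])
    also have "\<dots> \<le> ennreal (\<sigma>\<^sup>2)" using g_var[OF x] by (rule ennreal_leI)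
    finally show "(\<integral>\<^sup>+\<omega>. ennreal ((norm (noise_of_history k (u, restrict (\<lambda>n. \<xi> 0 \<omega>) {k})))\<^sup>2) \<partial>M)
        \<le> ennreal (\<sigma>\<^sup>2)" .
  qed measurable
  then have nn: "(\<integral>\<^sup>+\<omega>. ennreal ((norm (noise k \<omega>))\<^sup>2) \<partial>M) \<le> ennreal (\<sigma>\<^sup>2)"
    unfolding noise_eq_noise_of_history .
  have meas: "(\<lambda>\<omega>. (norm (noise k \<omega>))\<^sup>2) \<in> borel_measurable M" by measurable
  show "integrable M (\<lambda>\<omega>. (norm (noise k \<omega>))\<^sup>2)"
    using meas le_less_trans[OF nn] by (intro integrableI_bounded) simp_all
  have "(\<integral>\<omega>. (norm (noise k \<omega>))\<^sup>2 \<partial>M) = enn2real (\<integral>\<^sup>+\<omega>. ennreal ((norm (noise k \<omega>))\<^sup>2) \<partial>M)"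
    using meas by (intro integral_eq_nn_integral) auto
  also have "\<dots> \<le> \<sigma>\<^sup>2" using nn by (intro enn2real_leI) auto
  finally show "(\<integral>\<omega>. (norm (noise k \<omega>))\<^sup>2 \<partial>M) \<le> \<sigma>\<^sup>2" .
qed

lemma noise_inner:
  assumes z: "z \<in> X"
  shows "integrable M (\<lambda>\<omega>. noise k \<omega> \<bullet> (z - xit k \<omega>))"
    and "(\<integral>\<omega>. noise k \<omega> \<bullet> (z - xit k \<omega>) \<partial>M) = 0"
proof -
  define DX where "DX = diameter X"
  have DX: "norm (z - x) \<le> DX" if "x \<in> X" for x
    using diameter_bounded_bound[OF compact_imp_bounded[OF X(2)] z that] by (simp add: DX_def dist_norm)
  have DX0: "0 \<le> DX" using DX[OF z] by simp
  show int: "integrable M (\<lambda>\<omega>. noise k \<omega> \<bullet> (z - xit k \<omega>))"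
  proof (rule Bochner_Integration.integrable_bound)
    show "integrable M (\<lambda>\<omega>. DX * (1 + (norm (noise k \<omega>))\<^sup>2))"
      using noise_second_moment(1) by (intro integrable_mult_right integrable_add) auto
    have "norm (noise k \<omega> \<bullet> (z - xit k \<omega>)) \<le> norm (DX * (1 + (norm (noise k \<omega>))\<^sup>2))" for \<omega>
    proof -
      have le: "norm (noise k \<omega>) \<le> 1 + (norm (noise k \<omega>))\<^sup>2"
        using zero_le_power2[of "norm (noise k \<omega>) - 1 / 2"] by (simp add: power2_eq_square algebra_simps)
      have "norm (noise k \<omega> \<bullet> (z - xit k \<omega>)) \<le> norm (noise k \<omega>) * norm (z - xit k \<omega>)"
        unfolding real_norm_def by (rule Cauchy_Schwarz_ineq2)
      also have "\<dots> \<le> (1 + (norm (noise k \<omega>))\<^sup>2) * DX"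
        using le DX[OF xit_in] by (intro mult_mono) auto
      also have "\<dots> = norm (DX * (1 + (norm (noise k \<omega>))\<^sup>2))"
        using DX0 by (simp add: abs_mult)
      finally show ?thesis .
    qed
    then show "AE \<omega> in M. norm (noise k \<omega> \<bullet> (z - xit k \<omega>)) \<le> norm (DX * (1 + (norm (noise k \<omega>))\<^sup>2))"
      by simp
  qed measurable
  have "(\<integral>\<omega>. noise_of_history k (history k \<omega>, sample k \<omega>) \<bullet> (z - x_of_history k (fst (history k \<omega>, sample k \<omega>))) \<partial>M) = 0"
  proof (rule indep_var_integral_eq_0[OF history_indep_sample sample0_measurable distr_sample])
    show "integrable M (\<lambda>\<omega>. noise_of_history k (history k \<omega>, sample k \<omega>)
        \<bullet> (z - x_of_history k (fst (history k \<omega>, sample k \<omega>))))"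
      using int unfolding noise_eq_noise_of_history xit_eq_x_of_history by simp
    fix u
    have x: "x_of_history k u \<in> X" by (rule x_of_history_in)
    have "(\<integral>\<omega>. g (x_of_history k u) (\<xi> 0 \<omega>) - gradl (x_of_history k u) \<partial>M) = 0"
      using g_int[OF x] g_unbiased[OF x] by (simp add: Bochner_Integration.integral_diff prob_space)
    moreover have "(\<integral>\<omega>. (g (x_of_history k u) (\<xi> 0 \<omega>) - gradl (x_of_history k u)) \<bullet> (z - x_of_history k u) \<partial>M)
        = (\<integral>\<omega>. g (x_of_history k u) (\<xi> 0 \<omega>) - gradl (x_of_history k u) \<partial>M) \<bullet> (z - x_of_history k u)"
      using g_int[OF x] by (intro integral_inner_left) auto
    ultimately show "(\<integral>\<omega>. noise_of_history k (u, restrict (\<lambda>n. \<xi> 0 \<omega>) {k})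
        \<bullet> (z - x_of_history k (fst (u, restrict (\<lambda>n. \<xi> 0 \<omega>) {k}))) \<partial>M) = 0"
      unfolding noise_of_history_def by simp
  qed measurable
  then show "(\<integral>\<omega>. noise k \<omega> \<bullet> (z - xit k \<omega>) \<partial>M) = 0"
    unfolding noise_eq_noise_of_history xit_eq_x_of_history by simp
qed

lemma saddle_gap_step:
  fixes L \<mu> :: real
  assumes l_grad: "\<And>x. x \<in> X \<Longrightarrow> (l has_derivative (\<lambda>h. gradl x \<bullet> h)) (at x within X)"
    and l_lip: "\<And>x1 x2. x1 \<in> X \<Longrightarrow> x2 \<in> X \<Longrightarrow> norm (gradl x1 - gradl x2) \<le> L * norm (x1 - x2)"
    and l_strong: "\<And>x y. x \<in> X \<Longrightarrow> y \<in> X \<Longrightarrow>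
                     l y - l x - (y - x) \<bullet> gradl x \<ge> \<mu> / 2 * (norm (y - x))\<^sup>2"
    and mu_pos: "\<mu> > 0" and xs: "xs \<in> X" and ys: "ys \<in> Y"
    and beta_Suc: "beta (Suc k) = 2 / (\<mu> * (real k + 2) + 2 * L)"
  shows "Psad l F (yit (Suc k) \<omega>) xs - Psad l F ys (xit (Suc k) \<omega>) \<ge>
      (\<mu> * (real k + 2) + 2 * L) / 4 * (norm (xs - xit (Suc k) \<omega>))\<^sup>2
    + 1 / (2 * s) * (norm (ys - yit (Suc k) \<omega>))\<^sup>2
    - (\<mu> * real k + 2 * L) / 4 * (norm (xs - xit k \<omega>))\<^sup>2
    - 1 / (2 * s) * (norm (ys - yit k \<omega>))\<^sup>2
    - noise k \<omega> \<bullet> (xs - xit k \<omega>)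
    - (2 * lambda_max (transpose F ** F) * (diameter Y)\<^sup>2 + 2 * (norm (noise k \<omega>))\<^sup>2) / (\<mu> * (real k + 1))"
proof -
  define err where "err = lambda_max (transpose F ** F) * (diameter Y)\<^sup>2 + (norm (noise k \<omega>))\<^sup>2"
  have "err \<ge> 0" unfolding err_def using lambda_max_transpose_mult_nonneg[of F] by simp
  then have "2 * err / (\<mu> * (real k + 2)) \<le> 2 * err / (\<mu> * (real k + 1))"
    using mu_pos by (intro divide_left_mono) auto
  then have err_le: "err / (\<mu> * (real k + 2) / 2)
      \<le> (2 * lambda_max (transpose F ** F) * (diameter Y)\<^sup>2 + 2 * (norm (noise k \<omega>))\<^sup>2) / (\<mu> * (real k + 1))"
    unfolding err_def by (simp add: algebra_simps)
  have step: "Psad l F (yit (Suc k) \<omega>) xs - Psad l F ys (xit (Suc k) \<omega>) \<ge>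
      1 / (2 * b) * (norm (xs - xit (Suc k) \<omega>))\<^sup>2 + 1 / (2 * s) * (norm (ys - yit (Suc k) \<omega>))\<^sup>2
    - (1 / (2 * b) - \<mu> / 2) * (norm (xs - xit k \<omega>))\<^sup>2 - 1 / (2 * s) * (norm (ys - yit k \<omega>))\<^sup>2
    - noise k \<omega> \<bullet> (xs - xit k \<omega>) - err / (1 / b - L')"
    if b: "b > 0" "L' < 1 / b"
      and lip: "\<And>x1 x2. x1 \<in> X \<Longrightarrow> x2 \<in> X \<Longrightarrow> norm (gradl x1 - gradl x2) \<le> L' * norm (x1 - x2)"
      and x': "xit (Suc k) \<omega> = closest_point X (xit k \<omega> - b *\<^sub>R (g (xit k \<omega>) (\<xi> k \<omega>) + transpose F *v yit (Suc k) \<omega>))"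
    for b L'
    unfolding err_def noise_def
    by (rule pdhg_step_inequality[OF X(1) X_closed Y(1) Y_closed Y_bounded l_grad lip
          l_strong[OF xit_in xs] s_pos b xit_in xs ys yit_Suc x'])
  consider (regular) "\<mu> * (real k + 2) + 2 * L > 0" | (singleton) "X = {xs}"
  proof (cases "\<mu> * (real k + 2) + 2 * L > 0")
    case False
    moreover have "\<mu> * (real k + 2) > 0" using mu_pos by simp
    ultimately have "L < 0" by linarith
    then show ?thesis using lipschitz_negative_constant_singleton[OF l_lip _ xs] that(2) by blast
  qed (rule that(1))
  then show ?thesis
  proof cases
    case regular
    have beta: "beta (Suc k) > 0" "L < 1 / beta (Suc k)" "1 / beta (Suc k) - L = \<mu> * (real k + 2) / 2"
      using regular mult_pos_pos[OF mu_pos, of "real k + 2"] unfolding beta_Suc by (auto simp: field_simps)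
    have coeff: "1 / (2 * beta (Suc k)) = (\<mu> * (real k + 2) + 2 * L) / 4"
      "(\<mu> * (real k + 2) + 2 * L) / 4 - \<mu> / 2 = (\<mu> * real k + 2 * L) / 4"
      unfolding beta_Suc by (simp_all add: field_simps)
    show ?thesis
      using step[OF beta(1,2) l_lip xit_Suc] err_le unfolding coeff(1) unfolding coeff(2) beta(3)
      by linarith
  next
    case singleton
    txt \<open>On a singleton \<open>X\<close> the primal update ignores the step size and \<open>L\<close> may be negative,
      so the step inequality is applied with step size \<open>b\<close> and Lipschitz constant \<open>0\<close>.\<close>
    define b where "b = 2 / (\<mu> * (real k + 2))"
    have x: "xit k \<omega> = xs" "xit (Suc k) \<omega> = xs" using xit_in singleton by blast+
    have "closest_point X a = xs" for a using closest_point_in_set[OF X_closed X(3), of a] singleton by simp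
    then have x': "xit (Suc k) \<omega>
        = closest_point X (xit k \<omega> - b *\<^sub>R (g (xit k \<omega>) (\<xi> k \<omega>) + transpose F *v yit (Suc k) \<omega>))"
      using x by simp
    have b: "b > 0" "(0::real) < 1 / b" "1 / b - 0 = \<mu> * (real k + 2) / 2"
      using mult_pos_pos[OF mu_pos, of "real k + 2"] unfolding b_def by (auto simp: field_simps)
    have lip: "norm (gradl x1 - gradl x2) \<le> 0 * norm (x1 - x2)" if "x1 \<in> X" "x2 \<in> X" for x1 x2
      using that singleton by simp
    from step[OF b(1,2) lip x'] have "Psad l F (yit (Suc k) \<omega>) xs - Psad l F ys (xit (Suc k) \<omega>) \<ge>
        1 / (2 * s) * (norm (ys - yit (Suc k) \<omega>))\<^sup>2 - 1 / (2 * s) * (norm (ys - yit k \<omega>))\<^sup>2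
      - err / (\<mu> * (real k + 2) / 2)"
      unfolding x b(3) by simp
    then show ?thesis using err_le unfolding x by simp
  qed
qed

lemma expected_saddle_gap_step:
  fixes L \<mu> :: real
  assumes l_grad: "\<And>x. x \<in> X \<Longrightarrow> (l has_derivative (\<lambda>h. gradl x \<bullet> h)) (at x within X)"
    and l_lip: "\<And>x1 x2. x1 \<in> X \<Longrightarrow> x2 \<in> X \<Longrightarrow> norm (gradl x1 - gradl x2) \<le> L * norm (x1 - x2)"
    and l_strong: "\<And>x y. x \<in> X \<Longrightarrow> y \<in> X \<Longrightarrow>
                     l y - l x - (y - x) \<bullet> gradl x \<ge> \<mu> / 2 * (norm (y - x))\<^sup>2"
    and mu_pos: "\<mu> > 0" and xs: "xs \<in> X" and ys: "ys \<in> Y"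
    and beta_Suc: "beta (Suc k) = 2 / (\<mu> * (real k + 2) + 2 * L)"
  shows "(\<integral>\<omega>. Psad l F (yit (Suc k) \<omega>) xs - Psad l F ys (xit (Suc k) \<omega>) \<partial>M) \<ge>
      (\<mu> * (real k + 2) + 2 * L) / 4 * (\<integral>\<omega>. (norm (xs - xit (Suc k) \<omega>))\<^sup>2 \<partial>M)
    + 1 / (2 * s) * (\<integral>\<omega>. (norm (ys - yit (Suc k) \<omega>))\<^sup>2 \<partial>M)
    - (\<mu> * real k + 2 * L) / 4 * (\<integral>\<omega>. (norm (xs - xit k \<omega>))\<^sup>2 \<partial>M)
    - 1 / (2 * s) * (\<integral>\<omega>. (norm (ys - yit k \<omega>))\<^sup>2 \<partial>M)
    - (2 * lambda_max (transpose F ** F) * (diameter Y)\<^sup>2 + 2 * \<sigma>\<^sup>2) / (\<mu> * (real k + 1))"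
proof -
  define K where "K = 2 * lambda_max (transpose F ** F) * (diameter Y)\<^sup>2"
  define lower where "lower \<omega> = (\<mu> * (real k + 2) + 2 * L) / 4 * (norm (xs - xit (Suc k) \<omega>))\<^sup>2
    + 1 / (2 * s) * (norm (ys - yit (Suc k) \<omega>))\<^sup>2
    - (\<mu> * real k + 2 * L) / 4 * (norm (xs - xit k \<omega>))\<^sup>2
    - 1 / (2 * s) * (norm (ys - yit k \<omega>))\<^sup>2
    - noise k \<omega> \<bullet> (xs - xit k \<omega>)
    - (K + 2 * (norm (noise k \<omega>))\<^sup>2) / (\<mu> * (real k + 1))" for \<omega>
  have l_cont: "continuous_on X l"
    using l_grad has_derivative_continuous continuous_on_eq_continuous_within by blast
  have F_cont: "continuous_on S (\<lambda>x. F *v x)" for S :: "(real^'d) set"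
    by (rule linear_continuous_on[OF matrix_vector_mul_bounded_linear])
  have "integrable M (\<lambda>\<omega>. l xs + yit (Suc k) \<omega> \<bullet> (F *v xs))"
    by (rule integrable_yit) (intro continuous_intros)
  moreover have "integrable M (\<lambda>\<omega>. l (xit (Suc k) \<omega>) + ys \<bullet> (F *v xit (Suc k) \<omega>))"
    by (rule integrable_xit[where f = "\<lambda>x. l x + ys \<bullet> (F *v x)"]) (intro continuous_intros l_cont F_cont)
  ultimately have gap_int: "integrable M (\<lambda>\<omega>. Psad l F (yit (Suc k) \<omega>) xs - Psad l F ys (xit (Suc k) \<omega>))"
    unfolding Psad_def by (rule Bochner_Integration.integrable_diff)
  have dist_int: "integrable M (\<lambda>\<omega>. (norm (xs - xit j \<omega>))\<^sup>2)" "integrable M (\<lambda>\<omega>. (norm (ys - yit j \<omega>))\<^sup>2)"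
    for j by (intro integrable_xit integrable_yit continuous_intros)+
  have K_int: "has_bochner_integral M (\<lambda>_. K) K"
    using has_bochner_integral_integrable[of M "\<lambda>_. K"] by (simp add: prob_space)
  have lower_int: "has_bochner_integral M lower
      ((\<mu> * (real k + 2) + 2 * L) / 4 * (\<integral>\<omega>. (norm (xs - xit (Suc k) \<omega>))\<^sup>2 \<partial>M)
       + 1 / (2 * s) * (\<integral>\<omega>. (norm (ys - yit (Suc k) \<omega>))\<^sup>2 \<partial>M)
       - (\<mu> * real k + 2 * L) / 4 * (\<integral>\<omega>. (norm (xs - xit k \<omega>))\<^sup>2 \<partial>M)
       - 1 / (2 * s) * (\<integral>\<omega>. (norm (ys - yit k \<omega>))\<^sup>2 \<partial>M)
       - (\<integral>\<omega>. noise k \<omega> \<bullet> (xs - xit k \<omega>) \<partial>M)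
       - (K + 2 * (\<integral>\<omega>. (norm (noise k \<omega>))\<^sup>2 \<partial>M)) / (\<mu> * (real k + 1)))"
    unfolding lower_def
    by (intro has_bochner_integral_diff has_bochner_integral_add has_bochner_integral_mult_right
        has_bochner_integral_divide has_bochner_integral_integrable K_int dist_int
        noise_inner(1)[OF xs] noise_second_moment(1))
  have "lower \<omega> \<le> Psad l F (yit (Suc k) \<omega>) xs - Psad l F ys (xit (Suc k) \<omega>)" for \<omega>
    unfolding lower_def K_def by (rule saddle_gap_step[OF l_grad l_lip l_strong mu_pos xs ys beta_Suc])
  then have "(\<integral>\<omega>. lower \<omega> \<partial>M) \<le> (\<integral>\<omega>. Psad l F (yit (Suc k) \<omega>) xs - Psad l F ys (xit (Suc k) \<omega>) \<partial>M)"
    by (intro integral_mono integrable.intros[OF lower_int] gap_int)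
  moreover note has_bochner_integral_integral_eq[OF lower_int]
  moreover have "(K + 2 * (\<integral>\<omega>. (norm (noise k \<omega>))\<^sup>2 \<partial>M)) / (\<mu> * (real k + 1))
      \<le> (K + 2 * \<sigma>\<^sup>2) / (\<mu> * (real k + 1))"
    using noise_second_moment(2) mu_pos by (intro divide_right_mono) auto
  ultimately show ?thesis unfolding K_def[symmetric] noise_inner(2)[OF xs] by linarith
qed

lemma expected_saddle_gap_nonpos:
  assumes xs: "xs \<in> X" and ys: "ys \<in> Y"
    and saddle: "\<And>y x. y \<in> Y \<Longrightarrow> x \<in> X \<Longrightarrow> Psad l F y xs \<le> Psad l F ys xs \<and> Psad l F ys xs \<le> Psad l F ys x"
  shows "(\<integral>\<omega>. Psad l F (yit j \<omega>) xs - Psad l F ys (xit j \<omega>) \<partial>M) \<le> 0"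
proof -
  have "Psad l F (yit j \<omega>) xs - Psad l F ys (xit j \<omega>) \<le> 0" for \<omega>
    using saddle[OF yit_in[of j \<omega>] xs] saddle[OF ys xit_in[of j \<omega>]] by linarith
  then have "0 \<le> (\<integral>\<omega>. - (Psad l F (yit j \<omega>) xs - Psad l F ys (xit j \<omega>)) \<partial>M)"
    by (intro integral_nonneg_AE AE_I2) simp
  then show ?thesis unfolding Bochner_Integration.integral_minus by linarith
qed

end

theorem lemma4:
  fixes X :: "(real^'d) set" and Y :: "(real^'l) set" and F :: "real^'d^'l"
    and l :: "real^'d \<Rightarrow> real" and gradl :: "real^'d \<Rightarrow> real^'d"
    and L \<mu> \<sigma> s :: real
    and M :: "'w measure" and E :: "'e measure"
    and \<xi> :: "nat \<Rightarrow> 'w \<Rightarrow> 'e" and g :: "real^'d \<Rightarrow> 'e \<Rightarrow> real^'d"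
    and x0 xstar :: "real^'d" and y0 ystar :: "real^'l"
    and k :: nat
  assumes X: "convex X" "compact X" "X \<noteq> {}"
    and Y: "convex Y" "compact Y" "Y \<noteq> {}"
    and l_convex: "convex_on X l"
    and l_grad: "\<And>x. x \<in> X \<Longrightarrow> (l has_derivative (\<lambda>h. gradl x \<bullet> h)) (at x within X)"
    and l_cont_grad: "continuous_on X gradl"
    and l_lip: "\<And>x1 x2. x1 \<in> X \<Longrightarrow> x2 \<in> X \<Longrightarrow> norm (gradl x1 - gradl x2) \<le> L * norm (x1 - x2)"
    and mu_pos: "\<mu> > 0"
    and l_strong: "\<And>x y. x \<in> X \<Longrightarrow> y \<in> X \<Longrightarrow>
                     l y - l x - (y - x) \<bullet> gradl x \<ge> \<mu> / 2 * (norm (y - x))\<^sup>2"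
    and M: "prob_space M"
    and xi_rv: "\<And>n. \<xi> n \<in> measurable M E"
    and xi_indep: "prob_space.indep_vars M (\<lambda>_. E) \<xi> UNIV"
    and xi_ident: "\<And>n. distr M E (\<xi> n) = distr M E (\<xi> 0)"
    and g_meas: "(\<lambda>(x, e). g x e) \<in> borel_measurable (borel \<Otimes>\<^sub>M E)"
    and g_int: "\<And>x. x \<in> X \<Longrightarrow> integrable M (\<lambda>\<omega>. g x (\<xi> 0 \<omega>))"
    and g_unbiased: "\<And>x. x \<in> X \<Longrightarrow> (\<integral>\<omega>. g x (\<xi> 0 \<omega>) \<partial>M) = gradl x"
    and g_var_int: "\<And>x. x \<in> X \<Longrightarrow> integrable M (\<lambda>\<omega>. (norm (g x (\<xi> 0 \<omega>) - gradl x))\<^sup>2)"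
    and g_var: "\<And>x. x \<in> X \<Longrightarrow> (\<integral>\<omega>. (norm (g x (\<xi> 0 \<omega>) - gradl x))\<^sup>2 \<partial>M) \<le> \<sigma>\<^sup>2"
    and sigma_pos: "\<sigma> > 0"
    and s_pos: "s > 0"
    and x0: "x0 \<in> X" and y0: "y0 \<in> Y"
    and saddle: "xstar \<in> X" "ystar \<in> Y"
      "\<And>y x. y \<in> Y \<Longrightarrow> x \<in> X \<Longrightarrow>
         Psad l F y xstar \<le> Psad l F ystar xstar \<and> Psad l F ystar xstar \<le> Psad l F ystar x"
  defines "beta \<equiv> (\<lambda>j::nat. 2 / (\<mu> * (real j + 1) + 2 * L))"
  defines "yit \<equiv> (\<lambda>j \<omega>. fst (spdhg X Y F l g s beta x0 y0 (\<lambda>n. \<xi> n \<omega>) j))"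
    and "xit \<equiv> (\<lambda>j \<omega>. snd (spdhg X Y F l g s beta x0 y0 (\<lambda>n. \<xi> n \<omega>) j))"
  shows "0 \<ge> (\<integral>\<omega>. Psad l F (yit (Suc k) \<omega>) xstar - Psad l F ystar (xit (Suc k) \<omega>) \<partial>M)
    \<and> (\<integral>\<omega>. Psad l F (yit (Suc k) \<omega>) xstar - Psad l F ystar (xit (Suc k) \<omega>) \<partial>M)
      \<ge> (\<mu> * (real k + 2) + 2 * L) / 4 * (\<integral>\<omega>. (norm (xstar - xit (Suc k) \<omega>))\<^sup>2 \<partial>M)
       + 1 / (2 * s) * (\<integral>\<omega>. (norm (ystar - yit (Suc k) \<omega>))\<^sup>2 \<partial>M)
       - (\<mu> * real k + 2 * L) / 4 * (\<integral>\<omega>. (norm (xstar - xit k \<omega>))\<^sup>2 \<partial>M)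
       - 1 / (2 * s) * (\<integral>\<omega>. (norm (ystar - yit k \<omega>))\<^sup>2 \<partial>M)
       - (2 * lambda_max (transpose F ** F) * (diameter Y)\<^sup>2 + 2 * \<sigma>\<^sup>2) / (\<mu> * (real k + 1))"
proof -
  interpret S: spdhg_sampling M X Y F l gradl g E \<xi> \<sigma> s beta x0 y0
    by (intro spdhg_sampling.intro spdhg_sampling_axioms.intro M) (use assms in auto)
  have iterates: "yit = S.yit" "xit = S.xit"
    by (simp_all add: fun_eq_iff yit_def xit_def S.yit_def S.xit_def)
  have "beta (Suc k) = 2 / (\<mu> * (real k + 2) + 2 * L)"
    unfolding beta_def by (simp add: add.commute add.left_commute)
  from S.expected_saddle_gap_nonpos[OF saddle]
    S.expected_saddle_gap_step[OF l_grad l_lip l_strong mu_pos saddle(1,2) this]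
  show ?thesis unfolding iterates by (rule conjI)
qed

end
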